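(* Let $a,b,c,p\in\mathbb{C}$ with $-c\notin\mathbb{N}\cup\{0\}$. Define $(u_n)$ and $(v_n)$ by $u_0=1$, $u_1=\frac{ab}{c}+ip$, $u_2=\frac{iabp}{c}+\frac{a(a+1)b(b+1)}{2c(c+1)}-\frac{p^2}{2}$, $v_0=1$, $v_1=\frac{ab}{c}-ip$, $v_2=-\frac{iabp}{c}+\frac{a(a+1)b(b+1)}{2c(c+1)}-\frac{p^2}{2}$, and for all integers $n\ge2$, \[ u_{n+1}=\frac{(a+n)(b+n)+ip(c+2n)}{(n+1)(c+n)}u_n+\frac{p\left(p-i(a+b+2n-1)\right)}{(n+1)(c+n)}u_{n-1}-\frac{p^2}{(n+1)(c+n)}u_{n-2}, \] \[ v_{n+1}=\frac{(a+n)(b+n)-ip(c+2n)}{(n+1)(c+n)}v_n+\frac{p\left(p+i(a+b+2n-1)\right)}{(n+1)(c+n)}v_{n-1}-\frac{p^2}{(n+1)(c+n)}v_{n-2}. \] Then \[ \sin(pz)F(a,b;c;z)=\sum_{n=0}^\infty\frac{u_n-v_n}{2i}z^n,\qquad |z|<1. \]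
   Context: Here $i$ is the imaginary unit. For $a\in\mathbb{C}$, $(a)_n=a(a+1)\cdots(a+n-1)$ denotes the Pochhammer symbol, with $(a)_0=1$. For $a,b,c\in\mathbb{C}$ with $-c\notin\mathbb{N}\cup\{0\}$, the Gaussian hypergeometric function is $F(a,b;c;z)=\sum_{n=0}^\infty \frac{(a)_n(b)_n}{(c)_n\,n!}z^n$, $|z|<1$. *)

theory Defs
  imports Complex_Main
begin

definition hyp2F1 :: "complex \<Rightarrow> complex \<Rightarrow> complex \<Rightarrow> complex \<Rightarrow> complex" where
  "hyp2F1 a b c z =
     (\<Sum>n. pochhammer a n * pochhammer b n / (pochhammer c n * fact n) * z ^ n)"

fun useq :: "complex \<Rightarrow> complex \<Rightarrow> complex \<Rightarrow> complex \<Rightarrow> nat \<Rightarrow> complex" where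
  "useq a b c p 0 = 1"
| "useq a b c p (Suc 0) = a * b / c + \<i> * p"
| "useq a b c p (Suc (Suc 0)) =
     \<i> * a * b * p / c + a * (a + 1) * b * (b + 1) / (2 * c * (c + 1)) - p ^ 2 / 2"
| "useq a b c p (Suc (Suc (Suc m))) =
     (let n = of_nat (m + 2) :: complex in
        ((a + n) * (b + n) + \<i> * p * (c + 2 * n)) / ((n + 1) * (c + n)) * useq a b c p (Suc (Suc m))
      + p * (p - \<i> * (a + b + 2 * n - 1)) / ((n + 1) * (c + n)) * useq a b c p (Suc m)
      - p ^ 2 / ((n + 1) * (c + n)) * useq a b c p m)"

fun vseq :: "complex \<Rightarrow> complex \<Rightarrow> complex \<Rightarrow> complex \<Rightarrow> nat \<Rightarrow> complex" where
  "vseq a b c p 0 = 1"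
| "vseq a b c p (Suc 0) = a * b / c - \<i> * p"
| "vseq a b c p (Suc (Suc 0)) =
     - \<i> * a * b * p / c + a * (a + 1) * b * (b + 1) / (2 * c * (c + 1)) - p ^ 2 / 2"
| "vseq a b c p (Suc (Suc (Suc m))) =
     (let n = of_nat (m + 2) :: complex in
        ((a + n) * (b + n) - \<i> * p * (c + 2 * n)) / ((n + 1) * (c + n)) * vseq a b c p (Suc (Suc m))
      + p * (p + \<i> * (a + b + 2 * n - 1)) / ((n + 1) * (c + n)) * vseq a b c p (Suc m)
      - p ^ 2 / ((n + 1) * (c + n)) * vseq a b c p m)"

end

theory Submission
  imports Defs "HOL-Analysis.FPS_Convergence"
begin

(* The sequences u and v are the Taylor coefficients of e^(ipz) F(z) and
   e^(-ipz) F(z), so the claim follows from sin(pz) = (e^(ipz) - e^(-ipz)) / (2i).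
   To identify the coefficients, put G = e^(qz) F. Since G' - qG = e^(qz) F', the hypergeometric
   equation z(1-z) F'' + (c - (a+b+1) z) F' - ab F = 0 becomes the same equation for G with
   d/dz replaced by d/dz - q; its coefficient of z^n is the three-term recurrence defining u_n
   (for q = ip) and v_n (for q = -ip). Both products converge for |z| < 1 because F does
   (ratio test) and exp is entire. *)

definition hyp2F1_fps :: "complex \<Rightarrow> complex \<Rightarrow> complex \<Rightarrow> complex fps" where
  "hyp2F1_fps a b c = Abs_fps (\<lambda>n. pochhammer a n * pochhammer b n / (pochhammer c n * fact n))"

lemma hyp2F1_eq_eval_fps: "hyp2F1 a b c z = eval_fps (hyp2F1_fps a b c) z"
  by (simp add: hyp2F1_def hyp2F1_fps_def eval_fps_def)

lemma fps_nth_hyp2F1_fps_Suc: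
  "fps_nth (hyp2F1_fps a b c) (Suc n) =
     (a + of_nat n) * (b + of_nat n) / ((of_nat n + 1) * (c + of_nat n)) * fps_nth (hyp2F1_fps a b c) n"
  by (simp add: hyp2F1_fps_def pochhammer_rec' divide_inverse inverse_mult_distrib mult_ac)

lemma tendsto_add_of_nat_ratio:
  "(\<lambda>n. (a + of_nat n) / (b + of_nat n) :: 'a :: real_normed_field) \<longlonglongrightarrow> 1"
proof (rule Lim_transform_eventually)
  show "\<forall>\<^sub>F n in sequentially. (1 + a / of_nat n) / (1 + b / of_nat n) = (a + of_nat n) / (b + of_nat n)"
    using eventually_gt_at_top[of "0::nat"]
  proof eventually_elim
    case (elim n)
    then have "1 + a / of_nat n = (a + of_nat n) / of_nat n" "1 + b / of_nat n = (b + of_nat n) / of_nat n"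
      by (simp_all add: field_simps)
    then show ?case
      using elim by simp
  qed
  have "(\<lambda>n. (1 + a / of_nat n) / (1 + b / of_nat n)) \<longlonglongrightarrow> (1 + 0) / (1 + 0 :: 'a)"
    by (intro tendsto_intros) simp
  then show "(\<lambda>n. (1 + a / of_nat n) / (1 + b / of_nat n)) \<longlonglongrightarrow> (1 :: 'a)"
    by simp
qed

lemma summable_ratio_tendsto:
  fixes f r :: "nat \<Rightarrow> 'a :: {banach, real_normed_field}"
  assumes "\<And>n. f (Suc n) = r n * f n" and "r \<longlonglongrightarrow> l" and "norm l < 1"
  shows "summable f"
proof -
  define \<rho> where "\<rho> = (1 + norm l) / 2"
  have "\<forall>\<^sub>F n in sequentially. norm (r n) < \<rho>"
    using tendsto_norm[OF assms(2)] assms(3) by (intro order_tendstoD(2)) (auto simp: \<rho>_def)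
  then obtain N where N: "\<And>n. n \<ge> N \<Longrightarrow> norm (r n) < \<rho>"
    unfolding eventually_sequentially by blast
  show ?thesis
  proof (rule summable_ratio_test)
    show "\<rho> < 1"
      using assms(3) by (simp add: \<rho>_def)
    show "norm (f (Suc n)) \<le> \<rho> * norm (f n)" if "n \<ge> N" for n
      using N[OF that] by (simp add: assms(1) norm_mult mult_right_mono less_imp_le)
  qed
qed

lemma fps_conv_radius_hyp2F1_fps: "fps_conv_radius (hyp2F1_fps a b c) \<ge> 1"
  unfolding fps_conv_radius_def
proof (rule conv_radius_geI_ex')
  fix r :: real
  assume "0 < r" and "ereal r < 1"
  have "(\<lambda>n. (a + of_nat n) / (1 + of_nat n) * ((b + of_nat n) / (c + of_nat n)) * of_real r)
          \<longlonglongrightarrow> 1 * 1 * complex_of_real r"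
    by (intro tendsto_intros tendsto_add_of_nat_ratio)
  then show "summable (\<lambda>n. fps_nth (hyp2F1_fps a b c) n * of_real r ^ n)"
    using \<open>0 < r\<close> \<open>ereal r < 1\<close>
    by (intro summable_ratio_tendsto) (auto simp: fps_nth_hyp2F1_fps_Suc add.commute)
qed

lemma sums_exp_mult_hyp2F1_fps:
  fixes a b c q z :: complex
  assumes "norm z < 1"
  shows "(\<lambda>n. fps_nth (fps_exp q * hyp2F1_fps a b c) n * z ^ n) sums (exp (q * z) * hyp2F1 a b c z)"
proof -
  have "ereal (norm z) < 1"
    using assms by simp
  then have F: "norm z < fps_conv_radius (hyp2F1_fps a b c)"
    using fps_conv_radius_hyp2F1_fps by (rule order.strict_trans2)
  then have "norm z < fps_conv_radius (fps_exp q * hyp2F1_fps a b c)"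
    using fps_conv_radius_mult[of "fps_exp q"] by (simp add: order.strict_trans2)
  moreover have "eval_fps (fps_exp q * hyp2F1_fps a b c) z = exp (q * z) * hyp2F1 a b c z"
    using F by (simp add: eval_fps_mult hyp2F1_eq_eval_fps)
  ultimately show ?thesis
    by (metis sums_eval_fps)
qed

lemma hyp2F1_fps_ode:
  fixes a b c :: complex
  assumes "\<forall>k::nat. c \<noteq> - of_nat k"
  defines "F \<equiv> hyp2F1_fps a b c"
  shows "fps_X * (1 - fps_X) * fps_deriv (fps_deriv F)
           + (fps_const c - fps_const (a + b + 1) * fps_X) * fps_deriv F - fps_const (a * b) * F = 0"
proof (rule fps_ext)
  fix n
  have "c + of_nat n \<noteq> 0"
    using assms(1) by (metis add.commute add_eq_0_iff)
  moreover have "of_nat n + 1 \<noteq> (0 :: complex)"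
    using of_nat_neq_0[of n] by (simp add: add.commute)
  ultimately have "(of_nat n + 1) * (c + of_nat n) * fps_nth F (Suc n) =
                     (a + of_nat n) * (b + of_nat n) * fps_nth F n"
    unfolding F_def by (simp add: fps_nth_hyp2F1_fps_Suc)
  then show "fps_nth (fps_X * (1 - fps_X) * fps_deriv (fps_deriv F)
           + (fps_const c - fps_const (a + b + 1) * fps_X) * fps_deriv F - fps_const (a * b) * F) n
           = fps_nth 0 n"
    by (cases n) (auto simp: algebra_simps)
qed

lemma fps_deriv_exp_mult_shift:
  fixes F :: "'a :: field_char_0 fps"
  shows "fps_deriv (fps_exp q * F) - fps_const q * (fps_exp q * F) = fps_exp q * fps_deriv F"
  by (simp add: algebra_simps)

lemma exp_mult_hyp2F1_fps_ode:
  fixes a b c q :: complex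
  assumes "\<forall>k::nat. c \<noteq> - of_nat k"
  defines "G \<equiv> fps_exp q * hyp2F1_fps a b c"
    and "D \<equiv> \<lambda>H. fps_deriv H - fps_const q * H"
  shows "fps_X * (1 - fps_X) * D (D G)
           + (fps_const c - fps_const (a + b + 1) * fps_X) * D G - fps_const (a * b) * G = 0"
proof -
  let ?F = "hyp2F1_fps a b c"
  have DG: "D G = fps_exp q * fps_deriv ?F"
    unfolding D_def G_def by (rule fps_deriv_exp_mult_shift)
  have DDG: "D (D G) = fps_exp q * fps_deriv (fps_deriv ?F)"
    unfolding DG unfolding D_def by (rule fps_deriv_exp_mult_shift)
  have "fps_X * (1 - fps_X) * D (D G)
          + (fps_const c - fps_const (a + b + 1) * fps_X) * D G - fps_const (a * b) * G
        = fps_exp q * (fps_X * (1 - fps_X) * fps_deriv (fps_deriv ?F)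
          + (fps_const c - fps_const (a + b + 1) * fps_X) * fps_deriv ?F - fps_const (a * b) * ?F)"
    unfolding DDG unfolding DG unfolding G_def by (simp add: algebra_simps)
  also have "\<dots> = 0"
    using hyp2F1_fps_ode[OF assms(1)] by simp
  finally show ?thesis .
qed

lemma fps_nth_exp_mult_hyp2F1_fps_rec:
  fixes a b c q :: complex
  assumes "\<forall>k::nat. c \<noteq> - of_nat k" and "2 \<le> n"
  defines "g \<equiv> fps_nth (fps_exp q * hyp2F1_fps a b c)"
  shows "(of_nat n + 1) * (c + of_nat n) * g (Suc n) =
           ((a + of_nat n) * (b + of_nat n) + q * (c + 2 * of_nat n)) * g n
           - (q * (a + b + 2 * of_nat n - 1) + q ^ 2) * g (n - 1) + q ^ 2 * g (n - 2)"
proof -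
  obtain m where n: "n = Suc (Suc m)"
    using assms(2) by (metis add_2_eq_Suc le_Suc_ex)
  define G where "G = fps_exp q * hyp2F1_fps a b c"
  have DDG: "fps_deriv (fps_deriv G - fps_const q * G) - fps_const q * (fps_deriv G - fps_const q * G)
      = fps_deriv (fps_deriv G) - fps_const (2 * q) * fps_deriv G + fps_const (q ^ 2) * G"
    by (simp add: algebra_simps power2_eq_square numeral_fps_const)
  have "fps_nth (fps_X * (1 - fps_X) * (fps_deriv (fps_deriv G) - fps_const (2 * q) * fps_deriv G
           + fps_const (q ^ 2) * G) + (fps_const c - fps_const (a + b + 1) * fps_X)
           * (fps_deriv G - fps_const q * G) - fps_const (a * b) * G) n = 0"
    using exp_mult_hyp2F1_fps_ode[OF assms(1), of q a b] unfolding G_def[symmetric] DDG by simp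
  then show ?thesis
    unfolding g_def G_def[symmetric] n by simp (simp add: algebra_simps power2_eq_square)
qed

lemma useq_eq_fps_nth_exp_mult_hyp2F1_fps:
  fixes a b c p :: complex
  assumes "\<forall>k::nat. c \<noteq> - of_nat k"
  shows "useq a b c p n = fps_nth (fps_exp (\<i> * p) * hyp2F1_fps a b c) n"
  using assms
proof (induction a b c p n rule: useq.induct)
  case (4 a b c p m)
  define g where "g = fps_nth (fps_exp (\<i> * p) * hyp2F1_fps a b c)"
  define n :: complex where "n = of_nat (m + 2)"
  have "(n + 1) * (c + n) \<noteq> 0"
    using "4.prems" of_nat_neq_0[of "m + 2"] unfolding n_def
    by (metis add.commute add_eq_0_iff mult_eq_0_iff of_nat_Suc)
  moreover have "(n + 1) * (c + n) * g (Suc (Suc (Suc m))) =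
      ((a + n) * (b + n) + \<i> * p * (c + 2 * n)) * g (Suc (Suc m))
      - (\<i> * p * (a + b + 2 * n - 1) - p ^ 2) * g (Suc m) - p ^ 2 * g m"
    using fps_nth_exp_mult_hyp2F1_fps_rec[OF "4.prems", of "m + 2" "\<i> * p" a b]
    unfolding g_def n_def by (simp add: power_mult_distrib)
  ultimately have "g (Suc (Suc (Suc m))) =
      (((a + n) * (b + n) + \<i> * p * (c + 2 * n)) * g (Suc (Suc m))
      - (\<i> * p * (a + b + 2 * n - 1) - p ^ 2) * g (Suc m) - p ^ 2 * g m) / ((n + 1) * (c + n))"
    by (simp add: eq_divide_eq mult.commute)
  then show ?case
    unfolding useq.simps(4) Let_def n_def[symmetric] g_def[symmetric]
      "4.IH"[OF n_def "4.prems", folded g_def]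
    by (simp add: diff_divide_distrib add_divide_distrib algebra_simps power2_eq_square)
qed (simp_all add: fps_mult_nth hyp2F1_fps_def pochhammer_Suc power2_eq_square field_simps)

lemma vseq_eq_useq_uminus: "vseq a b c p n = useq a b c (- p) n"
  by (induction a b c p n rule: vseq.induct) (simp_all add: Let_def algebra_simps)

theorem theorem3p4:
  fixes a b c p z :: complex
  assumes "\<forall>k::nat. c \<noteq> - of_nat k"
    and "norm z < 1"
  shows "(\<lambda>n. (useq a b c p n - vseq a b c p n) / (2 * \<i>) * z ^ n)
           sums (sin (p * z) * hyp2F1 a b c z)"
proof -
  let ?g = "\<lambda>q n. fps_nth (fps_exp q * hyp2F1_fps a b c) n"
  have "(\<lambda>n. (?g (\<i> * p) n * z ^ n - ?g (- (\<i> * p)) n * z ^ n) / (2 * \<i>))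
          sums ((exp (\<i> * p * z) * hyp2F1 a b c z - exp (- (\<i> * p) * z) * hyp2F1 a b c z) / (2 * \<i>))"
    by (intro sums_divide sums_diff sums_exp_mult_hyp2F1_fps assms)
  moreover have "useq a b c p n = ?g (\<i> * p) n" "vseq a b c p n = ?g (- (\<i> * p)) n" for n
    using useq_eq_fps_nth_exp_mult_hyp2F1_fps[OF assms(1)]
    by (simp_all add: vseq_eq_useq_uminus)
  ultimately show ?thesis
    by (simp add: sin_exp_eq algebra_simps diff_divide_distrib)
qed

end
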